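(* Let $L\geq2$ be an even integer, $P\geq0$, $p_B\in[0,1]$. Let $\beta_1,\ldots,\beta_L$ be i.i.d. with $\mathbb{P}(\beta_l=0)=p_B$, $\mathbb{P}(\beta_l=1)=1-p_B$; $\theta_1,\ldots,\theta_L$ i.i.d. $\mathrm{Uniform}(0,2\pi)$; $\{\phi_{l,k}\}_{l\in\{1,\ldots,L\},k\geq1}$ i.i.d. $\mathrm{Uniform}(0,2\pi)$; all mutually independent. Define $$\mathbf{h}[k]:=\begin{bmatrix}\sum_{l=1}^{L/2}\beta_le^{j(\theta_l+\phi_{l,k})}\\ \sum_{l=L/2+1}^{L}\beta_le^{j(\theta_l+\phi_{l,k})}\end{bmatrix},\qquad (\alpha_1,\alpha_2):=\Big(\sum_{l=1}^{L/2}\beta_l,\ \sum_{l=L/2+1}^{L}\beta_l\Big),$$ and for $(i_1,i_2)\in\{0,\ldots,L/2\}^2$ $$\bar R(i_1,i_2):=\mathbb{E}\Big[\log\Big(1+\Big|\textstyle\sum_{l=1}^{i_1}e^{j\vartheta_l}\Big|^2P+\Big|\textstyle\sum_{l=L/2+1}^{L/2+i_2}e^{j\vartheta_l}\Big|^2P\Big)\Big],$$ where $\vartheta_1,\ldots,\vartheta_L$ are i.i.d. $\mathrm{Uniform}(0,2\pi)$. Then for every $\epsilon>0$, $$\lim_{K\to\infty}\mathbb{P}\Big(\Big|\frac1K\sum_{k=1}^K\log(1+\|\mathbf{h}[k]\|^2P)-\bar R(\alpha_1,\alpha_2)\Big|\geq\epsilon\Big)=0.$$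
   Context: This concerns non-coherent joint Alamouti space-time coding with phase diversity: the transmitters are split into two groups of $L/2$, each group playing the role of one Alamouti antenna, and each transmitter additionally applies per-symbol random phases $\phi_{l,k}$. $\log$ is the logarithm in a fixed base; $\|\cdot\|$ is the Euclidean norm. *)

theory Defs
  imports "HOL-Probability.Probability"
begin

definition unif2pi :: "real measure" where
  "unif2pi = uniform_measure lborel {0<..<2*pi}"

text \<open>Index type tagging the mutually independent random variables:
  beta_l, theta_l and phi_{l,k}.\<close>
datatype rv_idx = Beta nat | Theta nat | Phi nat nat

definition Rbar :: "real \<Rightarrow> nat \<Rightarrow> real \<Rightarrow> nat \<Rightarrow> nat \<Rightarrow> real" where
  "Rbar b L P i1 i2 =
     (\<integral>v. log b (1 + (cmod (\<Sum>l=1..i1. cis (v l)))\<^sup>2 * P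
                     + (cmod (\<Sum>l=L div 2 + 1..L div 2 + i2. cis (v l)))\<^sup>2 * P)
      \<partial>(PiM {1..L} (\<lambda>_. unif2pi)))"

definition h1 :: "nat \<Rightarrow> (nat \<Rightarrow> 'a \<Rightarrow> real) \<Rightarrow> (nat \<Rightarrow> 'a \<Rightarrow> real)
                   \<Rightarrow> (nat \<Rightarrow> nat \<Rightarrow> 'a \<Rightarrow> real) \<Rightarrow> nat \<Rightarrow> 'a \<Rightarrow> complex" where
  "h1 L beta theta phi k x =
     (\<Sum>l=1..L div 2. complex_of_real (beta l x) * cis (theta l x + phi l k x))"

definition h2 :: "nat \<Rightarrow> (nat \<Rightarrow> 'a \<Rightarrow> real) \<Rightarrow> (nat \<Rightarrow> 'a \<Rightarrow> real)
                   \<Rightarrow> (nat \<Rightarrow> nat \<Rightarrow> 'a \<Rightarrow> real) \<Rightarrow> nat \<Rightarrow> 'a \<Rightarrow> complex" where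
  "h2 L beta theta phi k x =
     (\<Sum>l=L div 2 + 1..L. complex_of_real (beta l x) * cis (theta l x + phi l k x))"

end

(*
  Fix the gains beta and the common phases theta.  The per-symbol rate Z_k = log (1 + |h[k]|^2 P)
  then depends on k only through the fresh phases phi_{.,k}, and its average over them is
  Rbar(alpha_1, alpha_2): the uniform product measure on the phases is invariant under rotating
  each coordinate (which absorbs theta_l) and under permuting coordinates (which moves the
  alpha_i active transmitters of group i to the first alpha_i slots of that group).  Hence the
  deviations Y_k = Z_k - Rbar(alpha) are bounded, and independence of the phase blocks for
  different k makes them pairwise orthogonal.  So E[(sum_{k<=K} Y_k)^2] <= K C^2, and Chebyshev's
  inequality bounds the probability in question by C^2 / (epsilon^2 K).  The gains are {0,1}-valued
  almost surely, which identifies alpha_i with the number of active transmitters.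
*)
theory Submission
  imports Defs
begin

section \<open>Rotation and permutation invariance of uniform phases\<close>

lemma sets_unif2pi [simp, measurable_cong]: "sets unif2pi = sets borel"
  by (simp add: unif2pi_def)

lemma prob_space_unif2pi: "prob_space unif2pi"
  unfolding unif2pi_def by (rule prob_space_uniform_measure) auto

lemma product_prob_space_unif2pi: "product_prob_space (\<lambda>_. unif2pi)"
  using prob_space_unif2pi by (intro product_prob_spaceI)

lemma borel_measurable_cis [measurable]: "cis \<in> borel_measurable borel"
  by (intro borel_measurable_continuous_onI continuous_intros)

lemma borel_measurable_PiM_unif2pi_component:
  "l \<in> I \<Longrightarrow> (\<lambda>\<phi>. \<phi> l) \<in> borel_measurable (PiM I (\<lambda>_. unif2pi))"
  using measurable_component_singleton[of l I "\<lambda>_. unif2pi"] by simp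

lemma emeasure_lborel_vimage_plus:
  fixes a :: real
  assumes "B \<in> sets borel"
  shows "emeasure lborel ((+) a -` B) = emeasure lborel B"
proof -
  have "emeasure lborel B = emeasure (distr lborel borel ((+) a)) B"
    by (simp add: lborel_distr_plus)
  also have "\<dots> = emeasure lborel ((+) a -` B)"
    using assms by (subst emeasure_distr) auto
  finally show ?thesis ..
qed

text \<open>Rotation by \<open>c\<close> on the circle, read in the chart \<open>(0, 2\<pi>)\<close>, is a translation by \<open>c\<close>
  on one piece and by \<open>c - 2\<pi>\<close> on the other.\<close>
lemma distr_unif2pi_wrapped_shift:
  fixes c :: real
  assumes c: "0 \<le> c" "c < 2*pi"
  defines "s \<equiv> \<lambda>x. if c + x < 2*pi then c + x else c + x - 2*pi"
  shows "distr unif2pi borel s = unif2pi"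
proof (rule measure_eqI)
  have s [measurable]: "s \<in> borel_measurable borel"
    unfolding s_def by measurable
  fix B assume "B \<in> sets (distr unif2pi borel s)"
  then have B [measurable]: "B \<in> sets borel" by simp
  have pieces: "s -` B \<inter> {0<..<2*pi} =
      (+) c -` (B \<inter> {c<..<2*pi}) \<union> (+) (c - 2*pi) -` (B \<inter> {0..<c})"
    using c by (auto simp: s_def algebra_simps split: if_splits)
  have "emeasure lborel (s -` B \<inter> {0<..<2*pi})
      = emeasure lborel ((+) c -` (B \<inter> {c<..<2*pi}))
        + emeasure lborel ((+) (c - 2*pi) -` (B \<inter> {0..<c}))"
    unfolding pieces using c by (intro plus_emeasure[symmetric]) auto
  also have "\<dots> = emeasure lborel (B \<inter> {c<..<2*pi}) + emeasure lborel (B \<inter> {0..<c})"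
    by (subst (1 2) emeasure_lborel_vimage_plus) auto
  also have "\<dots> = emeasure lborel (B \<inter> {c<..<2*pi} \<union> B \<inter> {0..<c})"
    by (intro plus_emeasure) auto
  also have "\<dots> = emeasure lborel (B \<inter> {0<..<2*pi})"
  proof (rule emeasure_eq_AE)
    show "AE x in lborel. (x \<in> B \<inter> {c<..<2*pi} \<union> B \<inter> {0..<c}) = (x \<in> B \<inter> {0<..<2*pi})"
      using AE_lborel_singleton[of c] AE_lborel_singleton[of 0]
      by eventually_elim (use c in auto)
  qed auto
  finally have *: "emeasure lborel (s -` B \<inter> {0<..<2*pi}) = emeasure lborel (B \<inter> {0<..<2*pi})" .
  have "s -` B \<in> sets borel"
    using measurable_sets[OF s B] by simp
  then show "emeasure (distr unif2pi borel s) B = emeasure unif2pi B"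
    unfolding unif2pi_def
    by (subst emeasure_distr) (auto simp: Int_commute *)
qed simp

lemma cis_add_multiple_2pi: "cis (x + 2*pi * of_int n) = cis x"
  by (simp add: cis_mult[symmetric])

lemma unif2pi_rotations:
  obtains R :: "real \<Rightarrow> real \<Rightarrow> real"
  where "\<And>t. R t \<in> borel_measurable borel" "\<And>t. distr unif2pi borel (R t) = unif2pi"
    "\<And>t x. cis (R t x) = cis (t + x)"
proof
  define c where "c t = 2*pi * frac (t / (2*pi))" for t
  define R where "R t x = (if c t + x < 2*pi then c t + x else c t + x - 2*pi)" for t x
  have c: "0 \<le> c t" "c t < 2*pi" for t
    using frac_ge_0[of "t / (2*pi)"] frac_lt_1[of "t / (2*pi)"] by (auto simp: c_def)
  show "R t \<in> borel_measurable borel" for t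
    unfolding R_def by measurable
  show "distr unif2pi borel (R t) = unif2pi" for t
    unfolding R_def using c by (rule distr_unif2pi_wrapped_shift)
  show "cis (R t x) = cis (t + x)" for t x
  proof -
    obtain n :: int where n: "t + x = (c t + x) + 2*pi * n"
      by (simp add: c_def frac_def algebra_simps)
    have "cis (c t + x) = cis (t + x)"
      unfolding n by (rule cis_add_multiple_2pi[symmetric])
    moreover have "cis (c t + x - 2*pi) = cis (c t + x)"
      using cis_add_multiple_2pi[of "c t + x - 2*pi" 1] by simp
    ultimately show ?thesis
      by (simp add: R_def)
  qed
qed

lemma (in product_prob_space) distr_PiM_coordinatewise:
  assumes I: "finite I"
    and T: "\<And>i. i \<in> I \<Longrightarrow> T i \<in> measurable (M i) (M i)"
    and preserving: "\<And>i. i \<in> I \<Longrightarrow> distr (M i) (M i) (T i) = M i"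
  shows "distr (PiM I M) (PiM I M) (\<lambda>x. \<lambda>i\<in>I. T i (x i)) = PiM I M"
proof (rule PiM_eqI[OF I])
  have meas: "(\<lambda>x. \<lambda>i\<in>I. T i (x i)) \<in> measurable (PiM I M) (PiM I M)"
    using T by (auto intro!: measurable_restrict measurable_compose[OF measurable_component_singleton])
  show "sets (distr (PiM I M) (PiM I M) (\<lambda>x. \<lambda>i\<in>I. T i (x i))) = sets (PiM I M)"
    by simp
  fix A assume A: "\<And>i. i \<in> I \<Longrightarrow> A i \<in> sets (M i)"
  have "(\<lambda>x. \<lambda>i\<in>I. T i (x i)) -` PiE I A \<inter> space (PiM I M) = PiE I (\<lambda>i. T i -` A i \<inter> space (M i))"
    using T by (auto simp: space_PiM PiE_def Pi_def extensional_def measurable_space)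
  then have "emeasure (distr (PiM I M) (PiM I M) (\<lambda>x. \<lambda>i\<in>I. T i (x i))) (PiE I A)
      = (\<Prod>i\<in>I. emeasure (M i) (T i -` A i \<inter> space (M i)))"
    using meas A T I by (subst emeasure_distr) (auto intro!: sets_PiM_I_finite emeasure_PiM)
  also have "\<dots> = (\<Prod>i\<in>I. emeasure (M i) (A i))"
    using A T preserving by (intro prod.cong refl) (metis emeasure_distr)
  finally show "emeasure (distr (PiM I M) (PiM I M) (\<lambda>x. \<lambda>i\<in>I. T i (x i))) (PiE I A)
      = (\<Prod>i\<in>I. emeasure (M i) (A i))" .
qed

lemma integral_PiM_unif2pi_rotate_permute:
  fixes f :: "('i \<Rightarrow> real) \<Rightarrow> real" and \<theta> :: "'i \<Rightarrow> real"
  assumes I: "finite I" and \<sigma>: "bij_betw \<sigma> I I"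
    and f: "f \<in> borel_measurable (PiM I (\<lambda>_. unif2pi))"
    and phase: "\<And>v w. (\<And>i. i \<in> I \<Longrightarrow> cis (v i) = cis (w i)) \<Longrightarrow> f v = f w"
  shows "(\<integral>\<omega>. f (\<lambda>i. \<theta> i + \<omega> (\<sigma> i)) \<partial>PiM I (\<lambda>_. unif2pi)) = (\<integral>v. f v \<partial>PiM I (\<lambda>_. unif2pi))"
proof -
  interpret product_prob_space "\<lambda>_. unif2pi"
    by (rule product_prob_space_unif2pi)
  obtain R where R: "\<And>t. R t \<in> borel_measurable borel" "\<And>t. distr unif2pi borel (R t) = unif2pi"
    and cis_R: "\<And>t x. cis (R t x) = cis (t + x)"
    using unif2pi_rotations by metis
  define T where "T i = R (\<theta> i)" for i
  have T_unif: "T i \<in> measurable unif2pi unif2pi" "distr unif2pi unif2pi (T i) = unif2pi" for i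
    using R[of "\<theta> i"] by (simp_all add: T_def cong: distr_cong measurable_cong_sets)
  have reindex: "distr (PiM I (\<lambda>_. unif2pi)) (PiM I (\<lambda>_. unif2pi)) (\<lambda>\<omega>. \<lambda>i\<in>I. \<omega> (\<sigma> i))
      = PiM I (\<lambda>_. unif2pi)"
    using distr_PiM_reindex[of I "\<lambda>_. unif2pi" \<sigma> I] \<sigma> prob_space_unif2pi
    by (auto simp: bij_betw_def)
  have rotate: "(\<lambda>v. \<lambda>i\<in>I. T i (v i)) \<in> measurable (PiM I (\<lambda>_. unif2pi)) (PiM I (\<lambda>_. unif2pi))"
    using T_unif(1) by (auto intro!: measurable_restrict measurable_compose[OF measurable_component_singleton])
  have permute: "(\<lambda>\<omega>. \<lambda>i\<in>I. \<omega> (\<sigma> i)) \<in> measurable (PiM I (\<lambda>_. unif2pi)) (PiM I (\<lambda>_. unif2pi))"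
    using \<sigma> by (auto simp: bij_betw_def intro!: measurable_restrict measurable_component_singleton)
  have "(\<integral>v. f v \<partial>PiM I (\<lambda>_. unif2pi)) = (\<integral>v. f (\<lambda>i\<in>I. T i (v i)) \<partial>PiM I (\<lambda>_. unif2pi))"
    by (subst (1) distr_PiM_coordinatewise[OF I T_unif, symmetric]) (rule integral_distr[OF rotate f])
  also have "\<dots> = (\<integral>\<omega>. f (\<lambda>i\<in>I. T i ((\<lambda>n\<in>I. \<omega> (\<sigma> n)) i)) \<partial>PiM I (\<lambda>_. unif2pi))"
    by (subst (1) reindex[symmetric]) (rule integral_distr[OF permute measurable_compose[OF rotate f]])
  also have "\<dots> = (\<integral>\<omega>. f (\<lambda>i. \<theta> i + \<omega> (\<sigma> i)) \<partial>PiM I (\<lambda>_. unif2pi))"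
    by (intro Bochner_Integration.integral_cong refl phase) (use \<sigma> in \<open>auto simp: T_def cis_R bij_betw_def\<close>)
  finally show ?thesis ..
qed

lemma obtain_permutation_mapping_blocks:
  assumes "finite I" "D1 \<subseteq> I" "D2 \<subseteq> I" "E1 \<subseteq> I" "E2 \<subseteq> I"
    "D1 \<inter> D2 = {}" "E1 \<inter> E2 = {}" "card D1 = card E1" "card D2 = card E2"
  obtains \<sigma> where "bij_betw \<sigma> I I" "bij_betw \<sigma> D1 E1" "bij_betw \<sigma> D2 E2"
proof -
  have fin: "finite D1" "finite D2" "finite E1" "finite E2"
    using assms finite_subset by blast+
  obtain f1 where f1: "bij_betw f1 D1 E1"
    using finite_same_card_bij fin assms by metis
  obtain f2 where f2: "bij_betw f2 D2 E2"
    using finite_same_card_bij fin assms by metis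
  have "card (I - (D1 \<union> D2)) = card (I - (E1 \<union> E2))"
    using assms fin by (simp add: card_Diff_subset card_Un_disjoint)
  then obtain g where g: "bij_betw g (I - (D1 \<union> D2)) (I - (E1 \<union> E2))"
    using finite_same_card_bij assms by (metis finite_Diff)
  define \<sigma> where "\<sigma> x = (if x \<in> D1 then f1 x else if x \<in> D2 then f2 x else g x)" for x
  have b1: "bij_betw \<sigma> D1 E1"
    by (intro bij_betw_cong[THEN iffD1, OF _ f1]) (auto simp: \<sigma>_def)
  have b2: "bij_betw \<sigma> D2 E2"
    using assms by (intro bij_betw_cong[THEN iffD1, OF _ f2]) (auto simp: \<sigma>_def)
  have b3: "bij_betw \<sigma> (I - (D1 \<union> D2)) (I - (E1 \<union> E2))"
    by (intro bij_betw_cong[THEN iffD1, OF _ g]) (auto simp: \<sigma>_def)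
  have "bij_betw \<sigma> (D1 \<union> D2 \<union> (I - (D1 \<union> D2))) (E1 \<union> E2 \<union> (I - (E1 \<union> E2)))"
    using b1 b2 b3 assms by (intro bij_betw_combine) auto
  moreover have "D1 \<union> D2 \<union> (I - (D1 \<union> D2)) = I" "E1 \<union> E2 \<union> (I - (E1 \<union> E2)) = I"
    using assms by auto
  ultimately show ?thesis
    using b1 b2 that by auto
qed

lemma Rbar_rotate_permute:
  fixes \<theta> :: "nat \<Rightarrow> real"
  assumes \<sigma>: "bij_betw \<sigma> {1..L} {1..L}" and i1: "i1 \<le> L div 2" and i2: "L div 2 + i2 \<le> L"
  shows "Rbar b L P i1 i2 = (\<integral>\<omega>. log b (1 + (cmod (\<Sum>l=1..i1. cis (\<theta> (\<sigma> l) + \<omega> (\<sigma> l))))\<^sup>2 * P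
      + (cmod (\<Sum>l=L div 2 + 1..L div 2 + i2. cis (\<theta> (\<sigma> l) + \<omega> (\<sigma> l))))\<^sup>2 * P) \<partial>PiM {1..L} (\<lambda>_. unif2pi))"
proof -
  define f where "f w = log b (1 + (cmod (\<Sum>l=1..i1. cis (w l)))\<^sup>2 * P
      + (cmod (\<Sum>l=L div 2 + 1..L div 2 + i2. cis (w l)))\<^sup>2 * P)" for w :: "nat \<Rightarrow> real"
  have blocks: "{1..i1} \<subseteq> {1..L}" "{L div 2 + 1..L div 2 + i2} \<subseteq> {1..L}"
    using i1 i2 by auto
  have sum_cis: "(\<lambda>w. \<Sum>l\<in>S. cis (w l)) \<in> borel_measurable (PiM {1..L} (\<lambda>_. unif2pi))"
    if "S \<subseteq> {1..L}" for S
  proof (rule borel_measurable_sum)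
    fix l assume "l \<in> S"
    with that show "(\<lambda>w. cis (w l)) \<in> borel_measurable (PiM {1..L} (\<lambda>_. unif2pi))"
      by (auto intro: measurable_compose[OF measurable_component_singleton])
  qed
  have f_meas: "f \<in> borel_measurable (PiM {1..L} (\<lambda>_. unif2pi))"
    unfolding f_def using sum_cis[OF blocks(1)] sum_cis[OF blocks(2)] by measurable
  have phase: "f v = f w" if "\<And>i. i \<in> {1..L} \<Longrightarrow> cis (v i) = cis (w i)" for v w
  proof -
    have "(\<Sum>l\<in>S. cis (v l)) = (\<Sum>l\<in>S. cis (w l))" if "S \<subseteq> {1..L}" for S
      using that \<open>\<And>i. i \<in> {1..L} \<Longrightarrow> cis (v i) = cis (w i)\<close> by (intro sum.cong) auto
    then show ?thesis
      unfolding f_def using blocks by presburger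
  qed
  have "Rbar b L P i1 i2 = (\<integral>w. f w \<partial>PiM {1..L} (\<lambda>_. unif2pi))"
    by (simp add: Rbar_def f_def)
  also have "\<dots> = (\<integral>\<omega>. f (\<lambda>i. \<theta> (\<sigma> i) + \<omega> (\<sigma> i)) \<partial>PiM {1..L} (\<lambda>_. unif2pi))"
    by (rule integral_PiM_unif2pi_rotate_permute[OF _ \<sigma> f_meas phase, symmetric]) simp
  finally show ?thesis
    by (simp add: f_def)
qed

lemma integral_rotated_phases_eq_Rbar:
  fixes \<theta> :: "nat \<Rightarrow> real"
  assumes A1: "A1 \<subseteq> {1..L div 2}" and A2: "A2 \<subseteq> {L div 2 + 1..L}"
  shows "(\<integral>v. log b (1 + ((cmod (\<Sum>l\<in>A1. cis (\<theta> l + v l)))\<^sup>2 + (cmod (\<Sum>l\<in>A2. cis (\<theta> l + v l)))\<^sup>2) * P)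
            \<partial>PiM {1..L} (\<lambda>_. unif2pi)) = Rbar b L P (card A1) (card A2)"
proof -
  define h where "h = L div 2"
  define a1 where "a1 = card A1"
  define a2 where "a2 = card A2"
  have "a1 \<le> card {1..h}"
    unfolding a1_def h_def using A1 by (intro card_mono) auto
  then have a1: "a1 \<le> h"
    by simp
  have "a2 \<le> card {h + 1..L}"
    unfolding a2_def h_def using A2 by (intro card_mono) auto
  then have a2: "h + a2 \<le> L"
    by (simp add: h_def)
  have "A1 \<subseteq> {1..L}" "A2 \<subseteq> {1..L}" "A1 \<inter> A2 = {}"
    using A1 A2 by fastforce+
  then obtain \<sigma> where \<sigma>: "bij_betw \<sigma> {1..L} {1..L}" "bij_betw \<sigma> {1..a1} A1"
      "bij_betw \<sigma> {h + 1..h + a2} A2"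
    using a1 a2
    by (elim obtain_permutation_mapping_blocks[of "{1..L}" "{1..a1}" "{h + 1..h + a2}" A1 A2, rotated -1])
      (auto simp: a1_def a2_def)
  have "(\<Sum>l=1..a1. cis (\<theta> (\<sigma> l) + \<omega> (\<sigma> l))) = (\<Sum>l\<in>A1. cis (\<theta> l + \<omega> l))"
    "(\<Sum>l=h + 1..h + a2. cis (\<theta> (\<sigma> l) + \<omega> (\<sigma> l))) = (\<Sum>l\<in>A2. cis (\<theta> l + \<omega> l))" for \<omega>
    using sum.reindex_bij_betw[OF \<sigma>(2), of "\<lambda>l. cis (\<theta> l + \<omega> l)"]
      sum.reindex_bij_betw[OF \<sigma>(3), of "\<lambda>l. cis (\<theta> l + \<omega> l)"] by simp_all
  then show ?thesis
    using Rbar_rotate_permute[OF \<sigma>(1) a1[unfolded h_def] a2[unfolded h_def], of b P \<theta>]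
    by (simp add: a1_def a2_def h_def distrib_right add.assoc)
qed

section \<open>Instantaneous and mean rates\<close>

text \<open>The gains enter through \<open>indicator {1}\<close>, which agrees with \<open>\<beta>\<close> on \<open>{0, 1}\<close>; this makes
  the average over the phases equal to \<open>mean_rate\<close> for every \<open>\<beta>\<close>, not only for binary ones.\<close>
definition inst_rate ::
    "real \<Rightarrow> nat \<Rightarrow> real \<Rightarrow> (nat \<Rightarrow> real) \<Rightarrow> (nat \<Rightarrow> real) \<Rightarrow> (nat \<Rightarrow> real) \<Rightarrow> real" where
  "inst_rate b L P \<beta> \<theta> \<phi> = log b (1 +
     ((cmod (\<Sum>l=1..L div 2. of_real (indicator {1} (\<beta> l)) * cis (\<theta> l + \<phi> l)))\<^sup>2
      + (cmod (\<Sum>l=L div 2 + 1..L. of_real (indicator {1} (\<beta> l)) * cis (\<theta> l + \<phi> l)))\<^sup>2) * P)"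

definition mean_rate :: "real \<Rightarrow> nat \<Rightarrow> real \<Rightarrow> (nat \<Rightarrow> real) \<Rightarrow> real" where
  "mean_rate b L P \<beta> =
     Rbar b L P (card {l \<in> {1..L div 2}. \<beta> l = 1}) (card {l \<in> {L div 2 + 1..L}. \<beta> l = 1})"

definition rate_deviation ::
    "real \<Rightarrow> nat \<Rightarrow> real \<Rightarrow> (nat \<Rightarrow> real) \<Rightarrow> (nat \<Rightarrow> real) \<Rightarrow> (nat \<Rightarrow> real) \<Rightarrow> real" where
  "rate_deviation b L P \<beta> \<theta> \<phi> = inst_rate b L P \<beta> \<theta> \<phi> - mean_rate b L P \<beta>"

lemma integral_inst_rate:
  "(\<integral>\<phi>. inst_rate b L P \<beta> \<theta> \<phi> \<partial>PiM {1..L} (\<lambda>_. unif2pi)) = mean_rate b L P \<beta>"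
proof -
  have active: "(\<Sum>l\<in>S. of_real (indicator {1} (\<beta> l)) * cis (\<theta> l + \<phi> l))
      = (\<Sum>l\<in>{l \<in> S. \<beta> l = 1}. cis (\<theta> l + \<phi> l))" if "finite S" for S \<phi>
    using that by (auto simp: sum.inter_filter indicator_def intro!: sum.cong)
  show ?thesis
    unfolding inst_rate_def mean_rate_def active[OF finite_atLeastAtMost]
    by (rule integral_rotated_phases_eq_Rbar) auto
qed

lemma borel_measurable_inst_rate:
  assumes "\<And>l. l \<in> {1..L} \<Longrightarrow> (\<lambda>x. \<beta> x l) \<in> borel_measurable N"
    and "\<And>l. l \<in> {1..L} \<Longrightarrow> (\<lambda>x. \<theta> x l) \<in> borel_measurable N"
    and "\<And>l. l \<in> {1..L} \<Longrightarrow> (\<lambda>x. \<phi> x l) \<in> borel_measurable N"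
  shows "(\<lambda>x. inst_rate b L P (\<beta> x) (\<theta> x) (\<phi> x)) \<in> borel_measurable N"
proof -
  have sum: "(\<lambda>x. \<Sum>l\<in>S. of_real (indicator {1} (\<beta> x l)) * cis (\<theta> x l + \<phi> x l))
      \<in> borel_measurable N" if "S \<subseteq> {1..L}" for S
    using that assms by (intro borel_measurable_sum) (measurable, auto)
  show ?thesis
    unfolding inst_rate_def using sum[of "{1..L div 2}"] sum[of "{L div 2 + 1..L}"] by measurable
qed

lemma real_card_eq_sum_indicator:
  "finite S \<Longrightarrow> real (card {l \<in> S. \<beta> l = 1}) = (\<Sum>l\<in>S. indicator {1} (\<beta> l))"
  by (simp add: indicator_def sum.If_cases Int_def)

lemma borel_measurable_mean_rate:
  assumes "\<And>l. l \<in> {1..L} \<Longrightarrow> (\<lambda>x. \<beta> x l) \<in> borel_measurable N"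
  shows "(\<lambda>x. mean_rate b L P (\<beta> x)) \<in> borel_measurable N"
proof -
  have card: "card {l \<in> S. \<beta> x l = 1} = nat \<lfloor>\<Sum>l\<in>S. indicator {1} (\<beta> x l) :: real\<rfloor>" if "finite S" for S x
    using real_card_eq_sum_indicator[OF that, of "\<beta> x"] by (metis floor_of_nat nat_int)
  have sum: "(\<lambda>x. \<Sum>l\<in>S. indicator {1} (\<beta> x l) :: real) \<in> borel_measurable N" if "S \<subseteq> {1..L}" for S
    using that assms by (intro borel_measurable_sum) (measurable, auto)
  show ?thesis
    unfolding mean_rate_def card[OF finite_atLeastAtMost]
    using sum[of "{1..L div 2}"] sum[of "{L div 2 + 1..L}"] by measurable
qed

lemma borel_measurable_rate_deviation:
  assumes "\<And>l. l \<in> {1..L} \<Longrightarrow> (\<lambda>x. \<beta> x l) \<in> borel_measurable N"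
    and "\<And>l. l \<in> {1..L} \<Longrightarrow> (\<lambda>x. \<theta> x l) \<in> borel_measurable N"
    and "\<And>l. l \<in> {1..L} \<Longrightarrow> (\<lambda>x. \<phi> x l) \<in> borel_measurable N"
  shows "(\<lambda>x. rate_deviation b L P (\<beta> x) (\<theta> x) (\<phi> x)) \<in> borel_measurable N"
  unfolding rate_deviation_def
  using borel_measurable_inst_rate[OF assms] borel_measurable_mean_rate[OF assms(1)] by measurable

lemma borel_measurable_inst_rate_phases:
  "inst_rate b L P \<beta> \<theta> \<in> borel_measurable (PiM {1..L} (\<lambda>_. unif2pi))"
  by (intro borel_measurable_inst_rate[where \<beta> = "\<lambda>_. \<beta>" and \<theta> = "\<lambda>_. \<theta>", simplified]
      borel_measurable_PiM_unif2pi_component) auto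

lemma abs_log_mono:
  assumes "1 \<le> y" "y \<le> z"
  shows "\<bar>log b y\<bar> \<le> \<bar>log b z\<bar>"
  using assms by (simp add: log_def divide_right_mono)

lemma norm_sum_le_card:
  fixes f :: "'i \<Rightarrow> 'b::real_normed_vector"
  assumes "\<And>i. i \<in> A \<Longrightarrow> norm (f i) \<le> 1"
  shows "norm (sum f A) \<le> card A"
  using norm_sum[of f A] sum_bounded_above[of A "\<lambda>i. norm (f i)" 1] assms by simp

lemma abs_inst_rate_le:
  assumes "P \<ge> 0"
  shows "\<bar>inst_rate b L P \<beta> \<theta> \<phi>\<bar> \<le> \<bar>log b (1 + 2 * (real L)\<^sup>2 * P)\<bar>"
proof -
  define s where "s S = cmod (\<Sum>l\<in>S. of_real (indicator {1} (\<beta> l)) * cis (\<theta> l + \<phi> l))" for S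
  have "(s S)\<^sup>2 \<le> (real L)\<^sup>2" if "S \<subseteq> {1..L}" for S
  proof -
    have "card S \<le> L"
      using card_mono[OF _ that] by simp
    moreover have "cmod (of_real (indicator {1} (\<beta> l)) * cis (\<theta> l + \<phi> l)) \<le> 1" for l
      by (simp add: norm_mult indicator_def)
    ultimately have "s S \<le> real L"
      unfolding s_def using norm_sum_le_card[of S] by (meson of_nat_le_iff order_trans)
    then show ?thesis
      by (simp add: s_def power_mono)
  qed
  from this[of "{1..L div 2}"] this[of "{L div 2 + 1..L}"]
  have "((s {1..L div 2})\<^sup>2 + (s {L div 2 + 1..L})\<^sup>2) * P \<le> 2 * (real L)\<^sup>2 * P"
    using assms by (intro mult_right_mono) auto
  moreover have "inst_rate b L P \<beta> \<theta> \<phi> = log b (1 + ((s {1..L div 2})\<^sup>2 + (s {L div 2 + 1..L})\<^sup>2) * P)"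
    by (simp add: inst_rate_def s_def)
  ultimately show ?thesis
    using assms by (simp add: abs_log_mono)
qed

lemma (in prob_space) abs_integral_le_const:
  fixes f :: "'a \<Rightarrow> real"
  assumes "f \<in> borel_measurable M" "\<And>x. x \<in> space M \<Longrightarrow> \<bar>f x\<bar> \<le> c"
  shows "\<bar>\<integral>x. f x \<partial>M\<bar> \<le> c"
proof -
  have "integrable M f"
    using assms by (intro integrable_const_bound[where B = c]) auto
  then have "(\<integral>x. \<bar>f x\<bar> \<partial>M) \<le> c"
    using assms(2) by (intro integral_le_const) auto
  then show ?thesis
    using integral_norm_bound[of M f] unfolding real_norm_def by linarith
qed

lemma abs_mean_rate_le:
  assumes "P \<ge> 0"
  shows "\<bar>mean_rate b L P \<beta>\<bar> \<le> \<bar>log b (1 + 2 * (real L)\<^sup>2 * P)\<bar>"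
proof -
  interpret prob_space "PiM {1..L} (\<lambda>_. unif2pi)"
    using prob_space_unif2pi by (intro prob_space_PiM)
  show ?thesis
    unfolding integral_inst_rate[symmetric, of b L P \<beta> "\<lambda>_. 0"]
    using abs_inst_rate_le[OF assms] by (intro abs_integral_le_const borel_measurable_inst_rate_phases)
qed

lemma abs_rate_deviation_le:
  "P \<ge> 0 \<Longrightarrow> \<bar>rate_deviation b L P \<beta> \<theta> \<phi>\<bar> \<le> 2 * \<bar>log b (1 + 2 * (real L)\<^sup>2 * P)\<bar>"
  using abs_inst_rate_le[of P b L \<beta> \<theta> \<phi>] abs_mean_rate_le[of P b L \<beta>]
  unfolding rate_deviation_def by linarith

lemma inst_rate_cong:
  assumes "\<And>l. l \<in> {1..L} \<Longrightarrow> \<beta> l = \<beta>' l \<and> \<theta> l = \<theta>' l \<and> \<phi> l = \<phi>' l"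
  shows "inst_rate b L P \<beta> \<theta> \<phi> = inst_rate b L P \<beta>' \<theta>' \<phi>'"
proof -
  have "(\<Sum>l\<in>S. of_real (indicator {1} (\<beta> l)) * cis (\<theta> l + \<phi> l))
      = (\<Sum>l\<in>S. of_real (indicator {1} (\<beta>' l)) * cis (\<theta>' l + \<phi>' l))" if "S \<subseteq> {1..L}" for S
    using assms that by (intro sum.cong) auto
  then show ?thesis
    unfolding inst_rate_def by simp
qed

lemma mean_rate_cong:
  assumes "\<And>l. l \<in> {1..L} \<Longrightarrow> \<beta> l = \<beta>' l"
  shows "mean_rate b L P \<beta> = mean_rate b L P \<beta>'"
proof -
  have "{l \<in> {1..L div 2}. \<beta> l = 1} = {l \<in> {1..L div 2}. \<beta>' l = 1}"
    "{l \<in> {L div 2 + 1..L}. \<beta> l = 1} = {l \<in> {L div 2 + 1..L}. \<beta>' l = 1}"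
    using assms by force+
  then show ?thesis
    by (simp add: mean_rate_def)
qed

lemma rate_deviation_cong:
  "(\<And>l. l \<in> {1..L} \<Longrightarrow> \<beta> l = \<beta>' l \<and> \<theta> l = \<theta>' l \<and> \<phi> l = \<phi>' l) \<Longrightarrow>
    rate_deviation b L P \<beta> \<theta> \<phi> = rate_deviation b L P \<beta>' \<theta>' \<phi>'"
  unfolding rate_deviation_def by (metis inst_rate_cong mean_rate_cong)

lemma integral_rate_deviation:
  assumes "P \<ge> 0"
  shows "(\<integral>\<phi>. rate_deviation b L P \<beta> \<theta> \<phi> \<partial>PiM {1..L} (\<lambda>_. unif2pi)) = 0"
proof -
  interpret prob_space "PiM {1..L} (\<lambda>_. unif2pi)"
    using prob_space_unif2pi by (intro prob_space_PiM)
  have "integrable (PiM {1..L} (\<lambda>_. unif2pi)) (inst_rate b L P \<beta> \<theta>)"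
    using abs_inst_rate_le[OF assms]
    by (intro integrable_const_bound[where B = "\<bar>log b (1 + 2 * (real L)\<^sup>2 * P)\<bar>"]
        borel_measurable_inst_rate_phases) auto
  then have "(\<integral>\<phi>. rate_deviation b L P \<beta> \<theta> \<phi> \<partial>PiM {1..L} (\<lambda>_. unif2pi))
      = (\<integral>\<phi>. inst_rate b L P \<beta> \<theta> \<phi> \<partial>PiM {1..L} (\<lambda>_. unif2pi))
        - (\<integral>\<phi>. mean_rate b L P \<beta> \<partial>PiM {1..L} (\<lambda>_. unif2pi))"
    unfolding rate_deviation_def by (rule Bochner_Integration.integral_diff[OF _ integrable_const])
  also have "\<dots> = 0"
    unfolding integral_inst_rate lebesgue_integral_const prob_space by simp
  finally show ?thesis .
qed

section \<open>A weak law for bounded orthogonal sequences\<close>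

lemma (in prob_space) integral_square_sum_orthogonal_le:
  fixes Y :: "'i \<Rightarrow> 'a \<Rightarrow> real" and C :: real
  assumes "finite F"
    and meas: "\<And>k. k \<in> F \<Longrightarrow> Y k \<in> borel_measurable M"
    and bound: "\<And>k x. k \<in> F \<Longrightarrow> x \<in> space M \<Longrightarrow> \<bar>Y k x\<bar> \<le> C"
    and orth: "\<And>k m. k \<in> F \<Longrightarrow> m \<in> F \<Longrightarrow> k \<noteq> m \<Longrightarrow> (\<integral>x. Y k x * Y m x \<partial>M) = 0"
  shows "(\<integral>x. (\<Sum>k\<in>F. Y k x)\<^sup>2 \<partial>M) \<le> card F * C\<^sup>2"
proof -
  have product: "integrable M (\<lambda>x. Y k x * Y m x)" "AE x in M. Y k x * Y m x \<le> C\<^sup>2"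
    if "k \<in> F" "m \<in> F" for k m
  proof -
    have abs_le: "\<bar>Y k x * Y m x\<bar> \<le> C\<^sup>2" if "x \<in> space M" for x
      using bound[OF \<open>k \<in> F\<close> that] bound[OF \<open>m \<in> F\<close> that]
      by (simp add: abs_mult power2_eq_square mult_mono')
    then show "integrable M (\<lambda>x. Y k x * Y m x)"
      using meas that by (auto intro!: integrable_const_bound[where B = "C\<^sup>2"])
    show "AE x in M. Y k x * Y m x \<le> C\<^sup>2"
      using abs_le by (auto intro!: AE_I2 simp: abs_le_iff)
  qed
  have "(\<integral>x. (\<Sum>k\<in>F. Y k x)\<^sup>2 \<partial>M) = (\<Sum>k\<in>F. \<Sum>m\<in>F. \<integral>x. Y k x * Y m x \<partial>M)"
    by (simp add: power2_eq_square sum_product product integral_sum integrable_sum)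
  also have "\<dots> = (\<Sum>k\<in>F. \<integral>x. Y k x * Y k x \<partial>M)"
    using \<open>finite F\<close> orth by (intro sum.cong refl) (auto simp: sum.remove intro!: sum.neutral)
  also have "\<dots> \<le> (\<Sum>k\<in>F. C\<^sup>2)"
    using product by (intro sum_mono integral_le_const) auto
  finally show ?thesis
    by simp
qed

lemma (in prob_space) prob_sample_mean_ge_le:
  fixes Y :: "nat \<Rightarrow> 'a \<Rightarrow> real" and C \<epsilon> :: real
  assumes meas: "\<And>k. k \<ge> 1 \<Longrightarrow> Y k \<in> borel_measurable M"
    and bound: "\<And>k x. k \<ge> 1 \<Longrightarrow> x \<in> space M \<Longrightarrow> \<bar>Y k x\<bar> \<le> C"
    and orth: "\<And>k m. k \<ge> 1 \<Longrightarrow> m \<ge> 1 \<Longrightarrow> k \<noteq> m \<Longrightarrow> (\<integral>x. Y k x * Y m x \<partial>M) = 0"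
    and "\<epsilon> > 0" "K \<ge> 1"
  shows "prob {x \<in> space M. \<epsilon> \<le> \<bar>(\<Sum>k=1..K. Y k x) / real K\<bar>} \<le> C\<^sup>2 / \<epsilon>\<^sup>2 / real K"
proof -
  define S where "S x = (\<Sum>k=1..K. Y k x)" for x
  have S_meas: "S \<in> borel_measurable M"
    unfolding S_def[abs_def] using meas by auto
  have "\<bar>S x\<bar> \<le> real K * C" if "x \<in> space M" for x
  proof -
    have "(\<Sum>k=1..K. \<bar>Y k x\<bar>) \<le> real (card {1..K}) * C"
      using bound that by (intro sum_bounded_above) auto
    then show ?thesis
      unfolding S_def by (metis card_atLeastAtMost diff_Suc_1 order_trans sum_abs)
  qed
  then have "integrable M (\<lambda>x. (S x)\<^sup>2)"
    using S_meas by (intro integrable_const_bound[where B = "(real K * C)\<^sup>2"])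
      (auto intro!: AE_I2 simp: abs_le_square_iff[symmetric] intro: order_trans[OF _ abs_ge_self])
  moreover have "{x \<in> space M. \<epsilon> \<le> \<bar>S x / real K\<bar>} = {x \<in> space M. (\<epsilon> * real K)\<^sup>2 \<le> (S x)\<^sup>2}"
  proof (intro Collect_cong conj_cong refl)
    fix x
    have "\<epsilon> \<le> \<bar>S x / real K\<bar> \<longleftrightarrow> \<bar>\<epsilon> * real K\<bar> \<le> \<bar>S x\<bar>"
      using \<open>\<epsilon> > 0\<close> \<open>K \<ge> 1\<close> by (simp add: field_simps)
    also have "\<dots> \<longleftrightarrow> (\<epsilon> * real K)\<^sup>2 \<le> (S x)\<^sup>2"
      by (rule abs_le_square_iff)
    finally show "\<epsilon> \<le> \<bar>S x / real K\<bar> \<longleftrightarrow> (\<epsilon> * real K)\<^sup>2 \<le> (S x)\<^sup>2" .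
  qed
  ultimately have "prob {x \<in> space M. \<epsilon> \<le> \<bar>S x / real K\<bar>} \<le> (\<integral>x. (S x)\<^sup>2 \<partial>M) / (\<epsilon> * real K)\<^sup>2"
    using \<open>\<epsilon> > 0\<close> \<open>K \<ge> 1\<close> by (auto intro!: integral_Markov_inequality_measure)
  also have "\<dots> \<le> real (card {1..K}) * C\<^sup>2 / (\<epsilon> * real K)\<^sup>2"
    unfolding S_def using meas bound orth
    by (intro divide_right_mono integral_square_sum_orthogonal_le) auto
  finally show ?thesis
    using \<open>K \<ge> 1\<close> by (simp add: S_def power2_eq_square field_simps)
qed

lemma (in prob_space) weak_law_bounded_orthogonal:
  fixes Y :: "nat \<Rightarrow> 'a \<Rightarrow> real" and C \<epsilon> :: real
  assumes meas: "\<And>k. k \<ge> 1 \<Longrightarrow> Y k \<in> borel_measurable M"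
    and bound: "\<And>k x. k \<ge> 1 \<Longrightarrow> x \<in> space M \<Longrightarrow> \<bar>Y k x\<bar> \<le> C"
    and orth: "\<And>k m. k \<ge> 1 \<Longrightarrow> m \<ge> 1 \<Longrightarrow> k \<noteq> m \<Longrightarrow> (\<integral>x. Y k x * Y m x \<partial>M) = 0"
    and "\<epsilon> > 0"
  shows "(\<lambda>K. prob {x \<in> space M. \<epsilon> \<le> \<bar>(\<Sum>k=1..K. Y k x) / real K\<bar>}) \<longlonglongrightarrow> 0"
proof (rule tendsto_sandwich[OF _ _ tendsto_const lim_const_over_n[of "C\<^sup>2 / \<epsilon>\<^sup>2"]])
  show "\<forall>\<^sub>F K in sequentially. 0 \<le> prob {x \<in> space M. \<epsilon> \<le> \<bar>(\<Sum>k=1..K. Y k x) / real K\<bar>}"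
    by simp
  show "\<forall>\<^sub>F K in sequentially. prob {x \<in> space M. \<epsilon> \<le> \<bar>(\<Sum>k=1..K. Y k x) / real K\<bar>} \<le> C\<^sup>2 / \<epsilon>\<^sup>2 / real K"
    using prob_sample_mean_ge_le[OF meas bound orth \<open>\<epsilon> > 0\<close>] by (rule eventually_sequentiallyI)
qed

section \<open>The rate deviations of the channel\<close>

lemma (in prob_space) integral_indep_var_mult_eq_0:
  fixes g :: "'s \<times> 's \<Rightarrow> real" and h :: "'s \<Rightarrow> real"
  assumes ind: "indep_var S T N V"
    and g [measurable]: "g \<in> borel_measurable (S \<Otimes>\<^sub>M N)"
    and h [measurable]: "h \<in> borel_measurable S"
    and bounded: "\<And>p. \<bar>g p\<bar> \<le> c" "\<And>t. \<bar>h t\<bar> \<le> c"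
    and mean_zero: "\<And>t. t \<in> space S \<Longrightarrow> (\<integral>v. g (t, v) \<partial>distr M N V) = 0"
  shows "(\<integral>x. h (T x) * g (T x, V x) \<partial>M) = 0"
proof -
  have [measurable]: "T \<in> measurable M S" "V \<in> measurable M N"
    and joint: "distr M S T \<Otimes>\<^sub>M distr M N V = distr M (S \<Otimes>\<^sub>M N) (\<lambda>x. (T x, V x))"
    using ind by (simp_all add: indep_var_distribution_eq)
  interpret T: prob_space "distr M S T" by (rule prob_space_distr) simp
  interpret V: prob_space "distr M N V" by (rule prob_space_distr) simp
  interpret TV: pair_prob_space "distr M S T" "distr M N V" ..
  define F where "F p = h (fst p) * g p" for p
  have F_meas: "F \<in> borel_measurable (distr M S T \<Otimes>\<^sub>M distr M N V)"
    unfolding F_def by (simp add: measurable_cong_sets[OF sets_pair_measure_cong[OF sets_distr sets_distr] refl])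
  have "integrable (distr M S T \<Otimes>\<^sub>M distr M N V) F"
    using F_meas bounded by (intro TV.integrable_const_bound[where B = "c * c"])
      (auto simp: F_def abs_mult intro!: mult_mono order_trans[OF abs_ge_zero bounded(2)])
  then have "(\<integral>p. F p \<partial>(distr M S T \<Otimes>\<^sub>M distr M N V)) = (\<integral>t. (\<integral>v. F (t, v) \<partial>distr M N V) \<partial>distr M S T)"
    by (rule TV.integral_fst'[symmetric])
  also have "\<dots> = (\<integral>t. 0 \<partial>distr M S T)"
    by (intro Bochner_Integration.integral_cong refl) (simp add: F_def mean_zero)
  finally show ?thesis
    by (simp add: joint F_def integral_distr)
qed

lemma (in prob_space) indep_vars_distr_restrict_eq_PiM:
  assumes ind: "indep_vars M' X I" and K: "K \<subseteq> I" "K \<noteq> {}"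
    and marginals: "\<And>i. i \<in> K \<Longrightarrow> distr M (M' i) (X i) = N i"
  shows "distr M (PiM K M') (\<lambda>x. \<lambda>i\<in>K. X i x) = PiM K N"
proof -
  have indep_K: "indep_vars M' X K"
    using indep_vars_subset[OF ind K(1)] .
  then have "random_variable (M' i) (X i)" if "i \<in> K" for i
    using that by (simp add: indep_vars_def)
  then have "distr M (PiM K M') (\<lambda>x. \<lambda>i\<in>K. X i x) = PiM K (\<lambda>i. distr M (M' i) (X i))"
    using indep_vars_iff_distr_eq_PiM'[OF K(2)] indep_K by blast
  also have "\<dots> = PiM K N"
    using marginals by (intro PiM_cong) auto
  finally show ?thesis .
qed

lemma integral_rate_deviation_Phi_block:
  assumes "P \<ge> 0"
  shows "(\<integral>v. rate_deviation b L P \<beta> \<theta> (\<lambda>l. v (Phi l k)) \<partial>PiM ((\<lambda>l. Phi l k) ` {1..L}) (\<lambda>_. unif2pi)) = 0"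
proof -
  define K where "K = (\<lambda>l. Phi l k) ` {1..L}"
  have select: "(\<lambda>\<omega>. \<lambda>l\<in>{1..L}. \<omega> (Phi l k)) \<in> measurable (PiM K (\<lambda>_. unif2pi)) (PiM {1..L} (\<lambda>_. unif2pi))"
    by (auto simp: K_def intro!: measurable_restrict measurable_component_singleton)
  have reindex: "distr (PiM K (\<lambda>_. unif2pi)) (PiM {1..L} (\<lambda>_. unif2pi)) (\<lambda>\<omega>. \<lambda>l\<in>{1..L}. \<omega> (Phi l k))
      = PiM {1..L} (\<lambda>_. unif2pi)"
    using distr_PiM_reindex[of K "\<lambda>_. unif2pi" "\<lambda>l. Phi l k" "{1..L}"] prob_space_unif2pi
    by (auto simp: K_def inj_on_def)
  have "(\<integral>v. rate_deviation b L P \<beta> \<theta> (\<lambda>l. v (Phi l k)) \<partial>PiM K (\<lambda>_. unif2pi))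
      = (\<integral>v. rate_deviation b L P \<beta> \<theta> ((\<lambda>\<omega>. \<lambda>l\<in>{1..L}. \<omega> (Phi l k)) v) \<partial>PiM K (\<lambda>_. unif2pi))"
    by (intro Bochner_Integration.integral_cong refl rate_deviation_cong) auto
  also have "\<dots> = (\<integral>\<phi>. rate_deviation b L P \<beta> \<theta> \<phi>
      \<partial>distr (PiM K (\<lambda>_. unif2pi)) (PiM {1..L} (\<lambda>_. unif2pi)) (\<lambda>\<omega>. \<lambda>l\<in>{1..L}. \<omega> (Phi l k)))"
    by (intro integral_distr[symmetric] select
        borel_measurable_rate_deviation[where \<beta> = "\<lambda>_. \<beta>" and \<theta> = "\<lambda>_. \<theta>", simplified]
        borel_measurable_PiM_unif2pi_component) auto
  also have "\<dots> = 0"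
    unfolding reindex using assms by (rule integral_rate_deviation)
  finally show ?thesis
    by (simp add: K_def)
qed

text \<open>Given the gains, the common phases and the phase block of symbol \<open>m\<close>, the deviation of
  symbol \<open>k\<close> still averages to zero over its own phase block, which is independent of them.\<close>
lemma (in prob_space) rate_deviations_orthogonal:
  fixes X :: "rv_idx \<Rightarrow> 'a \<Rightarrow> real"
  assumes ind: "indep_vars (\<lambda>_. borel) X J"
    and J: "\<And>l. l \<in> {1..L} \<Longrightarrow> Beta l \<in> J \<and> Theta l \<in> J \<and> Phi l k \<in> J \<and> Phi l m \<in> J"
    and "k \<noteq> m" "L \<ge> 1" "P \<ge> 0"
    and unif: "\<And>l. l \<in> {1..L} \<Longrightarrow> distr M borel (X (Phi l k)) = unif2pi"
  shows "(\<integral>x. rate_deviation b L P (\<lambda>l. X (Beta l) x) (\<lambda>l. X (Theta l) x) (\<lambda>l. X (Phi l m) x)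
            * rate_deviation b L P (\<lambda>l. X (Beta l) x) (\<lambda>l. X (Theta l) x) (\<lambda>l. X (Phi l k) x) \<partial>M) = 0"
proof -
  define A where "A = Beta ` {1..L} \<union> Theta ` {1..L} \<union> (\<lambda>l. Phi l m) ` {1..L}"
  define K where "K = (\<lambda>l. Phi l k) ` {1..L}"
  have indep: "indep_var (PiM A (\<lambda>_. borel)) (\<lambda>x. \<lambda>i\<in>A. X i x) (PiM K (\<lambda>_. borel)) (\<lambda>x. \<lambda>i\<in>K. X i x)"
    using J \<open>k \<noteq> m\<close> by (intro indep_var_restrict[OF ind]) (auto simp: A_def K_def)
  define g where "g p = rate_deviation b L P (\<lambda>l. fst p (Beta l)) (\<lambda>l. fst p (Theta l)) (\<lambda>l. snd p (Phi l k))"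
    for p :: "(rv_idx \<Rightarrow> real) \<times> (rv_idx \<Rightarrow> real)"
  define h where "h t = rate_deviation b L P (\<lambda>l. t (Beta l)) (\<lambda>l. t (Theta l)) (\<lambda>l. t (Phi l m))"
    for t :: "rv_idx \<Rightarrow> real"
  have g_meas: "g \<in> borel_measurable (PiM A (\<lambda>_. borel) \<Otimes>\<^sub>M PiM K (\<lambda>_. borel))"
    unfolding g_def
    by (intro borel_measurable_rate_deviation measurable_compose[OF measurable_fst measurable_component_singleton]
        measurable_compose[OF measurable_snd measurable_component_singleton]) (auto simp: A_def K_def)
  have h_meas: "h \<in> borel_measurable (PiM A (\<lambda>_. borel))"
    unfolding h_def by (intro borel_measurable_rate_deviation measurable_component_singleton) (auto simp: A_def)
  have distr_K: "distr M (PiM K (\<lambda>_. borel)) (\<lambda>x. \<lambda>i\<in>K. X i x) = PiM K (\<lambda>_. unif2pi)"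
    using J unif \<open>L \<ge> 1\<close> by (intro indep_vars_distr_restrict_eq_PiM[OF ind]) (auto simp: K_def)
  have mean_zero: "(\<integral>v. g (t, v) \<partial>PiM K (\<lambda>_. unif2pi)) = 0" for t
    unfolding g_def K_def fst_conv snd_conv using \<open>P \<ge> 0\<close> by (rule integral_rate_deviation_Phi_block)
  have "(\<integral>x. h (\<lambda>i\<in>A. X i x) * g (\<lambda>i\<in>A. X i x, \<lambda>i\<in>K. X i x) \<partial>M) = 0"
    using abs_rate_deviation_le[OF \<open>P \<ge> 0\<close>] mean_zero
    by (intro integral_indep_var_mult_eq_0[OF indep g_meas h_meas]) (auto simp: g_def h_def distr_K)
  moreover have "h (\<lambda>i\<in>A. X i x)
      = rate_deviation b L P (\<lambda>l. X (Beta l) x) (\<lambda>l. X (Theta l) x) (\<lambda>l. X (Phi l m) x)" for x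
    unfolding h_def by (rule rate_deviation_cong) (auto simp: A_def)
  moreover have "g (\<lambda>i\<in>A. X i x, \<lambda>i\<in>K. X i x)
      = rate_deviation b L P (\<lambda>l. X (Beta l) x) (\<lambda>l. X (Theta l) x) (\<lambda>l. X (Phi l k) x)" for x
    unfolding g_def by (rule rate_deviation_cong) (auto simp: A_def K_def)
  ultimately show ?thesis
    by simp
qed

lemma (in prob_space) AE_in_zero_one:
  fixes X :: "'a \<Rightarrow> real"
  assumes "X \<in> borel_measurable M"
    and "prob {x \<in> space M. X x = 0} = p" "prob {x \<in> space M. X x = 1} = 1 - p"
  shows "AE x in M. X x \<in> {0, 1}"
proof -
  have split: "{x \<in> space M. X x \<in> {0, 1}} = {x \<in> space M. X x = 0} \<union> {x \<in> space M. X x = 1}"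
    by auto
  have "{x \<in> space M. X x = 0} \<in> events" "{x \<in> space M. X x = 1} \<in> events"
    using assms(1) by measurable
  then have "prob {x \<in> space M. X x \<in> {0, 1}} = prob {x \<in> space M. X x = 0} + prob {x \<in> space M. X x = 1}"
    unfolding split by (intro finite_measure_Union) auto
  then have "prob {x \<in> space M. X x \<in> {0, 1}} = 1"
    using assms(2,3) by simp
  from AE_prob_1[OF this] show ?thesis
    by eventually_elim auto
qed

lemma log_gain_eq_inst_rate:
  assumes "\<And>l. l \<in> {1..L} \<Longrightarrow> beta l x \<in> {0, 1}"
  shows "log b (1 + ((cmod (h1 L beta theta phi k x))\<^sup>2 + (cmod (h2 L beta theta phi k x))\<^sup>2) * P)
      = inst_rate b L P (\<lambda>l. beta l x) (\<lambda>l. theta l x) (\<lambda>l. phi l k x)"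
proof -
  have "(\<Sum>l\<in>S. of_real (beta l x) * cis (theta l x + phi l k x))
      = (\<Sum>l\<in>S. of_real (indicator {1} (beta l x)) * cis (theta l x + phi l k x))"
    if "S \<subseteq> {1..L}" for S
    using assms that by (intro sum.cong refl) (force simp: indicator_def subset_iff)
  then show ?thesis
    unfolding inst_rate_def h1_def h2_def by simp
qed

lemma Rbar_eq_mean_rate:
  assumes "\<And>l. l \<in> {1..L} \<Longrightarrow> \<beta> l \<in> {0, 1}"
  shows "Rbar b L P (nat \<lfloor>\<Sum>l=1..L div 2. \<beta> l\<rfloor>) (nat \<lfloor>\<Sum>l=L div 2 + 1..L. \<beta> l\<rfloor>) = mean_rate b L P \<beta>"
proof -
  have "nat \<lfloor>\<Sum>l\<in>S. \<beta> l\<rfloor> = card {l \<in> S. \<beta> l = 1}" if "S \<subseteq> {1..L}" for S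
  proof -
    have "(\<Sum>l\<in>S. \<beta> l) = (\<Sum>l\<in>S. indicator {1} (\<beta> l))"
      using assms that by (intro sum.cong refl) (force simp: indicator_def subset_iff)
    also have "\<dots> = real (card {l \<in> S. \<beta> l = 1})"
      using finite_subset[OF that] by (simp add: real_card_eq_sum_indicator)
    finally show ?thesis
      by simp
  qed
  then show ?thesis
    unfolding mean_rate_def by simp
qed

lemma sample_rate_eq_mean_rate_deviation:
  assumes "\<And>l. l \<in> {1..L} \<Longrightarrow> beta l x \<in> {0, 1}" and "K \<ge> 1"
  shows "(1 / real K) * (\<Sum>k=1..K. log b (1 + ((cmod (h1 L beta theta phi k x))\<^sup>2
                                            + (cmod (h2 L beta theta phi k x))\<^sup>2) * P))
           - Rbar b L P (nat \<lfloor>\<Sum>l=1..L div 2. beta l x\<rfloor>) (nat \<lfloor>\<Sum>l=L div 2 + 1..L. beta l x\<rfloor>)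
      = (\<Sum>k=1..K. rate_deviation b L P (\<lambda>l. beta l x) (\<lambda>l. theta l x) (\<lambda>l. phi l k x)) / real K"
proof -
  have "(\<Sum>k=1..K. log b (1 + ((cmod (h1 L beta theta phi k x))\<^sup>2 + (cmod (h2 L beta theta phi k x))\<^sup>2) * P))
      = (\<Sum>k=1..K. inst_rate b L P (\<lambda>l. beta l x) (\<lambda>l. theta l x) (\<lambda>l. phi l k x))"
    by (intro sum.cong refl log_gain_eq_inst_rate assms(1))
  moreover have "Rbar b L P (nat \<lfloor>\<Sum>l=1..L div 2. beta l x\<rfloor>) (nat \<lfloor>\<Sum>l=L div 2 + 1..L. beta l x\<rfloor>)
      = mean_rate b L P (\<lambda>l. beta l x)"
    by (intro Rbar_eq_mean_rate assms(1))
  ultimately show ?thesis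
    unfolding rate_deviation_def sum_subtractf using assms(2) by (simp add: field_simps)
qed

lemma (in prob_space) measure_sample_rate_deviation_le:
  assumes binary: "AE x in M. \<forall>l\<in>{1..L}. beta l x \<in> {0, 1}" and "K \<ge> 1"
    and meas: "(\<lambda>x. \<Sum>k=1..K. rate_deviation b L P (\<lambda>l. beta l x) (\<lambda>l. theta l x) (\<lambda>l. phi l k x))
      \<in> borel_measurable M"
  shows "measure M {x \<in> space M.
            \<bar>(1 / real K) * (\<Sum>k=1..K. log b (1 + ((cmod (h1 L beta theta phi k x))\<^sup>2
                                            + (cmod (h2 L beta theta phi k x))\<^sup>2) * P))
             - Rbar b L P (nat \<lfloor>\<Sum>l=1..L div 2. beta l x\<rfloor>)
                          (nat \<lfloor>\<Sum>l=L div 2 + 1..L. beta l x\<rfloor>)\<bar> \<ge> \<epsilon>}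
    \<le> prob {x \<in> space M.
        \<epsilon> \<le> \<bar>(\<Sum>k=1..K. rate_deviation b L P (\<lambda>l. beta l x) (\<lambda>l. theta l x) (\<lambda>l. phi l k x)) / real K\<bar>}"
    (is "measure M ?E \<le> prob ?B")
proof (rule finite_measure_mono_AE)
  show "AE x in M. x \<in> ?E \<longrightarrow> x \<in> ?B"
    using binary
  proof eventually_elim
    case (elim x)
    then have "\<And>l. l \<in> {1..L} \<Longrightarrow> beta l x \<in> {0, 1}"
      by blast
    from sample_rate_eq_mean_rate_deviation[where beta = beta and x = x, OF this \<open>K \<ge> 1\<close>]
    show ?case
      by simp
  qed
  show "?B \<in> events"
    using meas by measurable
qed

theorem proposition7:
  fixes M :: "'a measure"
    and b :: real and L :: nat and P pB \<epsilon> :: real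
    and beta theta :: "nat \<Rightarrow> 'a \<Rightarrow> real"
    and phi :: "nat \<Rightarrow> nat \<Rightarrow> 'a \<Rightarrow> real"
  assumes "prob_space M"
    and "0 < b" and "b \<noteq> 1"
    and "even L" and "L \<ge> 2"
    and "P \<ge> 0" and "0 \<le> pB" and "pB \<le> 1"
    and "\<epsilon> > 0"
    and indep: "prob_space.indep_vars M (\<lambda>_. borel)
          (\<lambda>i. case i of Beta l \<Rightarrow> beta l | Theta l \<Rightarrow> theta l | Phi l k \<Rightarrow> phi l k)
          (Beta ` {1..L} \<union> Theta ` {1..L} \<union> {Phi l k | l k. l \<in> {1..L} \<and> k \<ge> 1})"
    and beta0: "\<And>l. l \<in> {1..L} \<Longrightarrow> measure M {x \<in> space M. beta l x = 0} = pB"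
    and beta1: "\<And>l. l \<in> {1..L} \<Longrightarrow> measure M {x \<in> space M. beta l x = 1} = 1 - pB"
    and theta_unif: "\<And>l. l \<in> {1..L} \<Longrightarrow> distr M borel (theta l) = unif2pi"
    and phi_unif: "\<And>l k. l \<in> {1..L} \<Longrightarrow> k \<ge> 1 \<Longrightarrow> distr M borel (phi l k) = unif2pi"
  shows "(\<lambda>K. measure M {x \<in> space M.
            \<bar>(1 / real K) * (\<Sum>k=1..K. log b (1 + ((cmod (h1 L beta theta phi k x))\<^sup>2
                                            + (cmod (h2 L beta theta phi k x))\<^sup>2) * P))
             - Rbar b L P (nat \<lfloor>\<Sum>l=1..L div 2. beta l x\<rfloor>)
                          (nat \<lfloor>\<Sum>l=L div 2 + 1..L. beta l x\<rfloor>)\<bar> \<ge> \<epsilon>})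
         \<longlonglongrightarrow> 0"
proof -
  interpret prob_space M by fact
  define X where "X = (\<lambda>i. case i of Beta l \<Rightarrow> beta l | Theta l \<Rightarrow> theta l | Phi l k \<Rightarrow> phi l k)"
  define J where "J = Beta ` {1..L} \<union> Theta ` {1..L} \<union> {Phi l k | l k. l \<in> {1..L} \<and> k \<ge> 1}"
  have ind: "indep_vars (\<lambda>_. borel) X J"
    using indep by (simp add: X_def J_def)
  then have X_meas: "X i \<in> borel_measurable M" if "i \<in> J" for i
    using that by (simp add: indep_vars_def)
  define Y where "Y k x = rate_deviation b L P (\<lambda>l. X (Beta l) x) (\<lambda>l. X (Theta l) x) (\<lambda>l. X (Phi l k) x)"
    for k x
  have Y_eq: "Y k x = rate_deviation b L P (\<lambda>l. beta l x) (\<lambda>l. theta l x) (\<lambda>l. phi l k x)" for k x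
    by (simp add: Y_def X_def)
  have Y_meas: "Y k \<in> borel_measurable M" if "k \<ge> 1" for k
    unfolding Y_def[abs_def] using that by (intro borel_measurable_rate_deviation X_meas) (auto simp: J_def)
  have law: "(\<lambda>K. prob {x \<in> space M. \<epsilon> \<le> \<bar>(\<Sum>k=1..K. Y k x) / real K\<bar>}) \<longlonglongrightarrow> 0"
  proof (rule weak_law_bounded_orthogonal[OF Y_meas _ _ \<open>\<epsilon> > 0\<close>])
    show "\<bar>Y k x\<bar> \<le> 2 * \<bar>log b (1 + 2 * (real L)\<^sup>2 * P)\<bar>" for k x
      unfolding Y_def using \<open>P \<ge> 0\<close> by (rule abs_rate_deviation_le)
    show "(\<integral>x. Y k x * Y m x \<partial>M) = 0" if "k \<ge> 1" "m \<ge> 1" "k \<noteq> m" for k m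
      unfolding Y_def using that \<open>L \<ge> 2\<close> \<open>P \<ge> 0\<close> phi_unif
      by (intro rate_deviations_orthogonal[OF ind]) (auto simp: J_def X_def)
  qed
  have "beta l \<in> borel_measurable M" if "l \<in> {1..L}" for l
    using X_meas[of "Beta l"] that by (simp add: X_def J_def)
  then have binary: "AE x in M. \<forall>l\<in>{1..L}. beta l x \<in> {0, 1}"
    using beta0 beta1 by (intro AE_finite_allI AE_in_zero_one) auto
  have "(\<lambda>x. \<Sum>k=1..K. Y k x) \<in> borel_measurable M" for K
    using Y_meas by (intro borel_measurable_sum) auto
  from measure_sample_rate_deviation_le[OF binary _ this[unfolded Y_eq]]
  show ?thesis
    by (intro tendsto_sandwich[OF _ _ tendsto_const law[unfolded Y_eq]] eventually_sequentiallyI) auto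
qed

end
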